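(* Let $k$ be a positive integer, and $G$ an edge-colored graph of order $n\geq 105k-24$ such that $|CN(u)\cup CN(v)|\geq n-1$ for every pair of vertices $u$ and $v$ in $V(G)$. Then $G$ contains $k$ (distinct) rainbow $C_4$'s.
   Context: An edge-colored graph is a finite simple graph $G$ with a map $C:E(G)\to\mathbb{N}$. For $v\in V(G)$, the color neighborhood $CN(v)$ is the set of colors assigned to edges incident to $v$. A subgraph is rainbow if all its edges have distinct colors; $C_4$ denotes a cycle of length 4. *)

theory Defs
  imports Main
begin

text \<open>A finite simple graph: a finite vertex set V and a set E of edges,
each edge being a 2-element subset of V. An edge colouring is a map
C from edges to natural numbers (only its values on E matter).\<close>

definition simple_graph :: "'a set \<Rightarrow> 'a set set \<Rightarrow> bool" where
  "simple_graph V E \<longleftrightarrow> finite V \<and> (\<forall>e\<in>E. e \<subseteq> V \<and> card e = 2)"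

definition color_nbhd :: "'a set set \<Rightarrow> ('a set \<Rightarrow> nat) \<Rightarrow> 'a \<Rightarrow> nat set" where
  "color_nbhd E C v = C ` {e \<in> E. v \<in> e}"

definition is_C4 :: "'a set \<Rightarrow> 'a set set \<Rightarrow> 'a set set \<Rightarrow> bool" where
  "is_C4 V E F \<longleftrightarrow> (\<exists>a b c d. a \<in> V \<and> b \<in> V \<and> c \<in> V \<and> d \<in> V \<and>
      distinct [a, b, c, d] \<and> F = {{a,b},{b,c},{c,d},{d,a}} \<and> F \<subseteq> E)"

definition rainbow :: "('a set \<Rightarrow> nat) \<Rightarrow> 'a set set \<Rightarrow> bool" where
  "rainbow C F \<longleftrightarrow> inj_on C F"

end

theory Submission
  imports Defs "HOL-Analysis.Convex"
begin

text \<open>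
  Fix a vertex \<open>x\<close>, a set \<open>R\<close> of neighbours of \<open>x\<close> carrying each color at \<open>x\<close> exactly once,
  and let \<open>B = V - R - {x}\<close>. The color condition is weakened by a defect \<open>s\<close>, so that it
  survives deleting the edges of rainbow \<open>C\<^sub>4\<close>'s found so far (\<open>4\<close> colors each).
  Without a rainbow \<open>C\<^sub>4\<close>, if \<open>p \<noteq> q\<close> see common neighbours in pairwise distinct colors
  from \<open>p\<close>, each in a color different from the one seen from \<open>q\<close>, then only three colors
  appear from \<open>q\<close>. For two vertices of \<open>B\<close> this is applied to their neighbours in \<open>B\<close>
  along colors missing at \<open>x\<close>; a double count finds two of them sharing few such colors,
  which forces \<open>|B| \<le> 3s + 10\<close>. For two vertices of \<open>R\<close> it is applied to neighbours in
  \<open>R\<close>, and a Cauchy-Schwarz count gives \<open>|R| \<le> 4 (|B| + s + 6) + 3\<close>. Hence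
  \<open>|V| \<le> 19s + 78\<close>, and with \<open>s = 4t\<close> a further rainbow \<open>C\<^sub>4\<close> exists as long as
  \<open>|V| \<ge> 76t + 79\<close>.
\<close>

lemma card_image_le_3_if_crossing:
  assumes inj: "inj_on f Y"
    and cross: "\<And>y z. y \<in> Y \<Longrightarrow> z \<in> Y \<Longrightarrow> g y \<noteq> g z \<Longrightarrow> f y = g z \<or> f z = g y"
  shows "card (g ` Y) \<le> 3"
proof (rule ccontr)
  assume "\<not> ?thesis"
  then obtain T where T: "T \<subseteq> g ` Y" "card T = 4"
    using obtain_subset_with_card_n[of 4 "g ` Y"] by force
  then obtain b1 b2 b3 b4 where b: "T = {b1, b2, b3, b4}" "distinct [b1, b2, b3, b4]"
    by (auto simp: card_Suc_eq numeral_eq_Suc)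
  obtain y1 y2 y3 y4 where ys: "y1 \<in> Y" "y2 \<in> Y" "y3 \<in> Y" "y4 \<in> Y"
    and "b1 = g y1" "b2 = g y2" "b3 = g y3" "b4 = g y4"
    using T(1) unfolding b(1) by (simp add: image_iff) blast
  then have distinct: "distinct [g y1, g y2, g y3, g y4]" using b(2) by simp
  \<comment> \<open>Orient the pair \<open>{i, j}\<close> towards \<open>j\<close> when \<open>f y\<^sub>i = g y\<^sub>j\<close>: by injectivity of \<open>f\<close> each
      \<open>y\<^sub>j\<close> receives at most one arc, so at most four of the six pairs are covered.\<close>
  show False
    using cross[OF ys(1,2)] cross[OF ys(1,3)] cross[OF ys(1,4)]
      cross[OF ys(2,3)] cross[OF ys(2,4)] cross[OF ys(3,4)] distinct ys inj[unfolded inj_on_def]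
    by (smt (verit) distinct_length_2_or_more distinct_singleton)
qed

lemma card_fiber_mates_le:
  assumes "finite A" "a \<in> A"
  shows "card {c\<in>A. c \<noteq> a \<and> f c = f a} \<le> card A - card (f ` A)"
proof -
  let ?X = "{c\<in>A. c \<noteq> a \<and> f c = f a}"
  have "f ` A = f ` (A - ?X)" using assms(2) by auto
  then have "card (f ` A) \<le> card A - card ?X"
    using card_image_le[of "A - ?X" f] assms(1) by (simp add: card_Diff_subset)
  moreover have "card ?X \<le> card A" using assms(1) by (intro card_mono) auto
  ultimately show ?thesis by linarith
qed

lemma card_non_injective_part_le:
  assumes fin: "finite A"
  shows "card {a\<in>A. \<exists>c\<in>A. c \<noteq> a \<and> f c = f a} \<le> 2 * (card A - card (f ` A))"
proof -
  define A2 where "A2 = {a\<in>A. \<exists>c\<in>A. c \<noteq> a \<and> f c = f a}"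
  have A2_sub: "A2 \<subseteq> A" unfolding A2_def by blast
  have disjoint: "f ` (A - A2) \<inter> f ` A2 = {}"
  proof (rule ccontr)
    assume "f ` (A - A2) \<inter> f ` A2 \<noteq> {}"
    then obtain a b where "a \<in> A - A2" "b \<in> A2" "f a = f b" by blast
    then show False unfolding A2_def by (cases "a = b") auto
  qed
  have "f ` A = f ` (A - A2) \<union> f ` A2" using A2_sub by blast
  moreover have "inj_on f (A - A2)" unfolding A2_def inj_on_def by blast
  ultimately have card_fA: "card (f ` A) = card (A - A2) + card (f ` A2)"
    using disjoint fin A2_sub card_Un_disjoint[of "f ` (A - A2)" "f ` A2"]
    by (simp add: card_image finite_subset)
  have "card A2 = (\<Sum>v\<in>f ` A2. card {a\<in>A2. f a = v})"
    using fin by (subst card_UN_disjoint[symmetric]) (auto simp: A2_def intro!: arg_cong[where f=card])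
  also have "\<dots> \<ge> (\<Sum>v\<in>f ` A2. 2)"
  proof (rule sum_mono)
    fix v assume "v \<in> f ` A2"
    then obtain a c where "a \<in> A2" "c \<in> A" "c \<noteq> a" "f c = f a" "f a = v" unfolding A2_def by auto
    then have "{a, c} \<subseteq> {a\<in>A2. f a = v}" by (auto simp: A2_def)
    then show "2 \<le> card {a\<in>A2. f a = v}"
      using \<open>c \<noteq> a\<close> fin by (metis (no_types, lifting) A2_def card_2_iff card_mono finite_subset mem_Collect_eq subsetI)
  qed
  finally have "2 * card (f ` A2) \<le> card A2" by simp
  moreover have "card A = card (A - A2) + card A2"
    using fin A2_sub by (simp add: card_Diff_subset card_mono finite_subset)
  ultimately show ?thesis using card_fA unfolding A2_def by linarith
qed

lemma card_equal_value_pairs_le: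
  assumes fin: "finite A"
  shows "card {(a, c). a \<in> A \<and> c \<in> A \<and> a \<noteq> c \<and> f a = f c} \<le> 2 * (card A - card (f ` A))\<^sup>2"
proof -
  define D where "D = card A - card (f ` A)"
  define A2 where "A2 = {a\<in>A. \<exists>c\<in>A. c \<noteq> a \<and> f c = f a}"
  have "{(a, c). a \<in> A \<and> c \<in> A \<and> a \<noteq> c \<and> f a = f c} \<subseteq> Sigma A2 (\<lambda>a. {c\<in>A. c \<noteq> a \<and> f c = f a})"
    unfolding A2_def by (auto intro: sym)
  then have "card {(a, c). a \<in> A \<and> c \<in> A \<and> a \<noteq> c \<and> f a = f c}
      \<le> card (Sigma A2 (\<lambda>a. {c\<in>A. c \<noteq> a \<and> f c = f a}))"
    using fin by (intro card_mono) (auto simp: A2_def)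
  also have "\<dots> = (\<Sum>a\<in>A2. card {c\<in>A. c \<noteq> a \<and> f c = f a})"
    using fin by (intro card_SigmaI) (auto simp: A2_def)
  also have "\<dots> \<le> card A2 * D"
    using sum_bounded_above[of A2 "\<lambda>a. card {c\<in>A. c \<noteq> a \<and> f c = f a}" D]
      card_fiber_mates_le[OF fin, of _ f] by (auto simp: A2_def D_def)
  also have "\<dots> \<le> 2 * D * D"
    using card_non_injective_part_le[OF fin, of f] unfolding A2_def D_def
    by (intro mult_right_mono) auto
  finally show ?thesis by (simp add: D_def power2_eq_square)
qed

lemma square_sum_le_card_mult_sum_squares:
  fixes k :: "'b \<Rightarrow> nat"
  shows "(\<Sum>i\<in>I. k i)\<^sup>2 \<le> card I * (\<Sum>i\<in>I. (k i)\<^sup>2)"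
proof -
  have "(\<Sum>i\<in>I. real (k i) * 1)\<^sup>2 \<le> (\<Sum>i\<in>I. (real (k i))\<^sup>2) * (\<Sum>i\<in>I. 1\<^sup>2)"
    by (rule Cauchy_Schwarz_ineq_sum)
  then have "real ((\<Sum>i\<in>I. k i)\<^sup>2) \<le> real (card I * (\<Sum>i\<in>I. (k i)\<^sup>2))"
    by (simp add: mult.commute)
  then show ?thesis by linarith
qed

lemma double_counting:
  assumes "finite A" "finite B"
  shows "(\<Sum>a\<in>A. card {b\<in>B. P a b}) = (\<Sum>b\<in>B. card {a\<in>A. P a b})"
  by (rule sum_multicount_gen) (use assms in auto)

lemma quadratic_count_bound:
  fixes m T L :: int
  assumes m: "3 \<le> m" and lower: "m * m \<le> 2 * T + m" and upper: "T\<^sup>2 \<le> m * (m * m * L + T)"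
  shows "m \<le> 4 * L + 3"
proof (rule ccontr)
  assume "\<not> ?thesis"
  then have big: "m * (4 * L + 4) \<le> m * m" using m by (intro mult_left_mono) auto
  have "3 * m \<le> m * m" using m by (intro mult_right_mono) auto
  then have "0 \<le> (2 * T - (m * m - m)) * (2 * T + (m * m - m) - 2 * m)"
    using lower m by (intro mult_nonneg_nonneg) linarith+
  also have "\<dots> = 4 * (T\<^sup>2 - m * T) - m * m * ((m - 1) * (m - 3))"
    by (simp add: algebra_simps power2_eq_square)
  finally have "m * m * ((m - 1) * (m - 3)) \<le> m * m * (4 * m * L)"
    using upper by (simp add: algebra_simps power2_eq_square)
  then have "(m - 1) * (m - 3) \<le> 4 * m * L"
    using m by (simp add: mult_le_cancel_left_pos)
  then show False using big by (simp add: algebra_simps)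
qed

lemma card_square_le_if_pairwise_covering:
  assumes fin: "finite R" and sub: "\<And>w. w \<in> R \<Longrightarrow> K w \<subseteq> R"
    and cover: "\<And>w y. w \<in> R \<Longrightarrow> y \<in> R \<Longrightarrow> w \<noteq> y \<Longrightarrow> y \<in> K w \<or> w \<in> K y"
  shows "card R * card R \<le> 2 * (\<Sum>w\<in>R. card (K w)) + card R"
proof -
  let ?P = "Sigma R K"
  have finK: "finite (K w)" if "w \<in> R" for w using sub[OF that] fin by (rule finite_subset)
  have "R \<times> R \<subseteq> ?P \<union> prod.swap ` ?P \<union> (\<lambda>w. (w, w)) ` R"
    using cover by fastforce
  then have "card (R \<times> R) \<le> card (?P \<union> prod.swap ` ?P \<union> (\<lambda>w. (w, w)) ` R)"
    using fin finK by (intro card_mono) auto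
  also have "\<dots> \<le> card ?P + card (prod.swap ` ?P) + card ((\<lambda>w. (w, w)) ` R)"
    by (meson add_right_mono card_Un_le order_trans)
  also have "\<dots> \<le> 2 * card ?P + card R"
    using card_image_le[of ?P prod.swap] card_image_le[OF fin, of "\<lambda>w. (w, w)"] fin finK by simp
  finally show ?thesis using fin finK by (simp add: card_cartesian_product)
qed

lemma sum_square_card_covering_eq:
  assumes fin: "finite R" and sub: "\<And>w. w \<in> R \<Longrightarrow> K w \<subseteq> R"
  shows "(\<Sum>y\<in>R. (card {w\<in>R. y \<in> K w})\<^sup>2) = (\<Sum>w\<in>R. \<Sum>w'\<in>R. card (K w \<inter> K w'))"
proof -
  let ?k = "\<lambda>y. card {w\<in>R. y \<in> K w}"
  have "(\<Sum>y\<in>R. (?k y)\<^sup>2) = (\<Sum>y\<in>R. \<Sum>w\<in>{w\<in>R. y \<in> K w}. ?k y)"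
    by (simp add: power2_eq_square)
  also have "\<dots> = (\<Sum>w\<in>R. \<Sum>y\<in>{y\<in>R. y \<in> K w}. ?k y)"
    using fin fin by (rule sum.swap_restrict)
  also have "\<dots> = (\<Sum>w\<in>R. \<Sum>w'\<in>R. card {y\<in>{y\<in>R. y \<in> K w}. y \<in> K w'})"
    using fin by (intro sum.cong refl double_counting) auto
  also have "\<dots> = (\<Sum>w\<in>R. \<Sum>w'\<in>R. card (K w \<inter> K w'))"
    using sub by (intro sum.cong refl arg_cong[where f = card]) auto
  finally show ?thesis .
qed

text \<open>A family of subsets of \<open>R\<close> covering every pair in one of its two orientations has
  total size about \<open>|R|\<^sup>2/2\<close>; by Cauchy-Schwarz this forces pairwise overlaps of size
  about \<open>|R|/4\<close>.\<close>

lemma card_le_if_pairwise_covering: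
  fixes K :: "'a \<Rightarrow> 'a set"
  assumes fin: "finite R" and sub: "\<And>w. w \<in> R \<Longrightarrow> K w \<subseteq> R"
    and cover: "\<And>w y. w \<in> R \<Longrightarrow> y \<in> R \<Longrightarrow> w \<noteq> y \<Longrightarrow> y \<in> K w \<or> w \<in> K y"
    and overlap: "\<And>w w'. w \<in> R \<Longrightarrow> w' \<in> R \<Longrightarrow> w \<noteq> w' \<Longrightarrow> card (K w \<inter> K w') \<le> L"
  shows "card R \<le> 4 * L + 3"
proof -
  define m where "m = card R"
  define k where "k y = card {w\<in>R. y \<in> K w}" for y
  define T where "T = (\<Sum>w\<in>R. card (K w))"
  have "T = (\<Sum>w\<in>R. card {y\<in>R. y \<in> K w})"
    unfolding T_def using sub by (intro sum.cong refl arg_cong[where f = card]) auto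
  then have T_eq: "(\<Sum>y\<in>R. k y) = T" unfolding k_def using double_counting[OF fin fin] by simp
  have row: "(\<Sum>w'\<in>R. card (K w \<inter> K w')) \<le> card (K w) + m * L" if w: "w \<in> R" for w
  proof -
    have "(\<Sum>w'\<in>R. card (K w \<inter> K w')) = card (K w) + (\<Sum>w'\<in>R - {w}. card (K w \<inter> K w'))"
      using fin w by (simp add: sum.remove)
    also have "\<dots> \<le> card (K w) + card (R - {w}) * L"
      using overlap w sum_bounded_above[of "R - {w}" "\<lambda>w'. card (K w \<inter> K w')" L] by fastforce
    also have "\<dots> \<le> card (K w) + m * L"
      unfolding m_def by (simp add: card_Diff1_le)
    finally show ?thesis .
  qed
  have "(\<Sum>y\<in>R. (k y)\<^sup>2) = (\<Sum>w\<in>R. \<Sum>w'\<in>R. card (K w \<inter> K w'))"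
    unfolding k_def by (rule sum_square_card_covering_eq[OF fin sub])
  also have "\<dots> \<le> (\<Sum>w\<in>R. card (K w) + m * L)" using row by (rule sum_mono)
  also have "\<dots> = m * m * L + T" unfolding T_def m_def by (simp add: sum.distrib)
  finally have "(\<Sum>y\<in>R. (k y)\<^sup>2) \<le> m * m * L + T" .
  then have "T\<^sup>2 \<le> m * (m * m * L + T)"
    using square_sum_le_card_mult_sum_squares[of k R] unfolding T_eq m_def
    by (meson le_trans mult_le_mono2)
  then have "int T ^ 2 \<le> int m * (int m * int m * int L + int T)"
    by (metis of_nat_add of_nat_le_iff of_nat_mult of_nat_power)
  moreover have "m * m \<le> 2 * T + m"
    using card_square_le_if_pairwise_covering[OF fin sub cover] unfolding m_def T_def .
  then have "int m * int m \<le> 2 * int T + int m"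
    by (metis of_nat_add of_nat_le_iff of_nat_mult of_nat_numeral)
  ultimately have "3 \<le> m \<Longrightarrow> m \<le> 4 * L + 3"
    using quadratic_count_bound[of "int m" "int T" "int L"] by linarith
  then show ?thesis unfolding m_def by linarith
qed

lemma card_off_diagonal_ge:
  assumes "finite A"
  shows "card A * (card A - 1) \<le> card {p\<in>A \<times> A. fst p \<noteq> snd p}"
proof -
  have "card A * card A = card (A \<times> A)" by (simp add: card_cartesian_product)
  also have "\<dots> \<le> card ({p\<in>A \<times> A. fst p \<noteq> snd p} \<union> (\<lambda>a. (a, a)) ` A)"
    using assms by (intro card_mono) auto
  also have "\<dots> \<le> card {p\<in>A \<times> A. fst p \<noteq> snd p} + card A"
    using card_Un_le card_image_le[OF assms, of "\<lambda>a. (a, a)"] by (meson add_left_mono order_trans)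
  finally show ?thesis by (simp add: diff_mult_distrib2)
qed

lemma simple_graph_finite_edges:
  assumes "simple_graph V E" shows "finite E"
proof (rule finite_subset)
  show "E \<subseteq> Pow V" using assms unfolding simple_graph_def by blast
qed (use assms in \<open>simp add: simple_graph_def\<close>)

locale rainbow_C4_free =
  fixes V :: "'a set" and E :: "'a set set" and C :: "'a set \<Rightarrow> nat"
  assumes simple: "simple_graph V E"
    and no_rainbow_C4: "\<not> (\<exists>F. is_C4 V E F \<and> rainbow C F)"
begin

abbreviation CN :: "'a \<Rightarrow> nat set" where "CN \<equiv> color_nbhd E C"

lemma finite_V: "finite V"
  using simple unfolding simple_graph_def by blast

lemma finite_E: "finite E"
  using simple by (rule simple_graph_finite_edges)

lemma edge_vertices:
  assumes "{u, v} \<in> E" shows "u \<in> V" "v \<in> V" "u \<noteq> v"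
  using simple assms unfolding simple_graph_def by (auto simp: card_2_iff)

definition colors_to :: "'a \<Rightarrow> 'a set \<Rightarrow> nat set" where
  "colors_to w Z = (\<lambda>z. C {w, z}) ` {z\<in>Z. {w, z} \<in> E}"

lemma color_nbhd_eq_colors_to: "CN w = colors_to w V"
proof
  show "CN w \<subseteq> colors_to w V"
  proof
    fix \<gamma> assume "\<gamma> \<in> CN w"
    then obtain e where e: "e \<in> E" "w \<in> e" "C e = \<gamma>" unfolding color_nbhd_def by auto
    then obtain a b where "e = {a, b}" using simple unfolding simple_graph_def by (meson card_2_iff)
    then obtain z where "e = {w, z}" using e(2) by auto
    then show "\<gamma> \<in> colors_to w V" unfolding colors_to_def using e edge_vertices(2) by auto
  qed
  show "colors_to w V \<subseteq> CN w" unfolding colors_to_def color_nbhd_def by auto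
qed

lemma card_colors_to_le:
  assumes "finite Z" shows "card (colors_to w Z) \<le> card Z"
proof -
  have "card (colors_to w Z) \<le> card {z\<in>Z. {w, z} \<in> E}"
    unfolding colors_to_def using assms by (intro card_image_le) simp
  also have "\<dots> \<le> card Z" using assms by (intro card_mono) auto
  finally show ?thesis .
qed

lemma finite_colors_to: "finite Z \<Longrightarrow> finite (colors_to w Z)"
  unfolding colors_to_def by simp

text \<open>The core obstruction: the 4-cycle \<open>p y q z\<close> is rainbow unless two opposite edges share a color.\<close>

lemma card_crossing_colors_le_3:
  assumes "p \<noteq> q"
    and edges: "\<And>y. y \<in> Y \<Longrightarrow> {p, y} \<in> E \<and> {q, y} \<in> E \<and> C {p, y} \<noteq> C {q, y}"
    and inj: "inj_on (\<lambda>y. C {p, y}) Y"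
  shows "card ((\<lambda>y. C {q, y}) ` Y) \<le> 3"
proof (rule card_image_le_3_if_crossing[OF inj])
  fix y z assume y: "y \<in> Y" and z: "z \<in> Y" and yz: "C {q, y} \<noteq> C {q, z}"
  show "C {p, y} = C {q, z} \<or> C {p, z} = C {q, y}"
  proof (rule ccontr)
    assume opposite: "\<not> ?thesis"
    have py: "{p, y} \<in> E" and qy: "{q, y} \<in> E" and "C {p, y} \<noteq> C {q, y}" using edges[OF y] by auto
    have pz: "{p, z} \<in> E" and qz: "{q, z} \<in> E" and "C {p, z} \<noteq> C {q, z}" using edges[OF z] by auto
    have "y \<noteq> z" using yz by auto
    then have "C {p, y} \<noteq> C {p, z}" using inj y z unfolding inj_on_def by blast
    let ?F = "{{p, y}, {q, y}, {q, z}, {p, z}}"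
    have "?F = {{p, y}, {y, q}, {q, z}, {z, p}}" by (simp add: insert_commute)
    moreover have "distinct [p, y, q, z]"
      using edge_vertices(3)[OF py] edge_vertices(3)[OF qy] edge_vertices(3)[OF pz] edge_vertices(3)[OF qz]
        \<open>p \<noteq> q\<close> \<open>y \<noteq> z\<close> by auto
    ultimately have "is_C4 V E ?F"
      unfolding is_C4_def using py qy pz qz edge_vertices(1,2)[OF py] edge_vertices(1,2)[OF qz] by blast
    moreover have "rainbow C ?F" unfolding rainbow_def
      using opposite yz \<open>C {p, y} \<noteq> C {q, y}\<close> \<open>C {p, z} \<noteq> C {q, z}\<close> \<open>C {p, y} \<noteq> C {p, z}\<close>
      by (auto simp: inj_on_def)
    ultimately show False using no_rainbow_C4 by blast
  qed
qed

end

locale rainbow_star = rainbow_C4_free +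
  fixes x :: 'a and R :: "'a set" and s :: nat
  assumes center: "x \<in> V"
    and star_edges: "\<And>y. y \<in> R \<Longrightarrow> {x, y} \<in> E"
    and star_inj: "inj_on (\<lambda>y. C {x, y}) R"
    and star_colors: "(\<lambda>y. C {x, y}) ` R = CN x"
    and defect: "\<And>u v. u \<in> V \<Longrightarrow> v \<in> V \<Longrightarrow> u \<noteq> v \<Longrightarrow> card V \<le> card (CN u \<union> CN v) + 1 + s"
begin

abbreviation \<alpha> :: "'a \<Rightarrow> nat" where "\<alpha> y \<equiv> C {x, y}"

definition outer :: "'a set" where "outer = V - R - {x}"

lemma star_subset: "R \<subseteq> V - {x}"
  using star_edges edge_vertices(2,3) by blast

lemma finite_R: "finite R"
  using star_subset finite_V by (meson finite_Diff finite_subset)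

lemma finite_outer: "finite outer"
  unfolding outer_def using finite_V by simp

lemma V_eq: "V = insert x (R \<union> outer)"
  unfolding outer_def using center star_subset by blast

lemma card_V_eq: "card V = card outer + card R + 1"
proof -
  have "R \<inter> outer = {}" "x \<notin> R \<union> outer" unfolding outer_def using star_subset by auto
  have "card V = card (insert x (R \<union> outer))" using V_eq by (rule arg_cong)
  also have "\<dots> = card outer + card R + 1"
    using \<open>R \<inter> outer = {}\<close> \<open>x \<notin> R \<union> outer\<close> finite_R finite_outer by (simp add: card_Un_disjoint)
  finally show ?thesis .
qed

lemma card_star: "card R = card (CN x)"
  using star_colors star_inj card_image by fastforce

definition crossing :: "'a \<Rightarrow> 'a set" where
  "crossing w = {y\<in>R. {w, y} \<in> E \<and> C {w, y} \<noteq> \<alpha> y}"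

lemma card_colors_to_crossing_le:
  assumes "w \<noteq> x" shows "card (colors_to w (crossing w)) \<le> 3"
proof -
  have "colors_to w (crossing w) = (\<lambda>y. C {w, y}) ` crossing w"
    unfolding colors_to_def crossing_def by auto
  also have "card \<dots> \<le> 3"
  proof (rule card_crossing_colors_le_3)
    show "inj_on \<alpha> (crossing w)" using star_inj unfolding crossing_def by (rule inj_on_subset) auto
  qed (use assms star_edges in \<open>auto simp: crossing_def\<close>)
  finally show ?thesis .
qed

lemma colors_to_star_subset:
  "colors_to w R \<subseteq> \<alpha> ` {y\<in>R. {w, y} \<in> E \<and> C {w, y} = \<alpha> y} \<union> colors_to w (crossing w)"
  unfolding colors_to_def crossing_def by auto

lemma color_nbhd_subset: "CN w \<subseteq> colors_to w {x} \<union> colors_to w R \<union> colors_to w outer"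
  unfolding color_nbhd_eq_colors_to by (subst V_eq) (auto simp: colors_to_def)

definition matched :: "'a \<Rightarrow> 'a set" where
  "matched w = insert w {y\<in>R. {w, y} \<in> E \<and> C {w, y} = \<alpha> y}"

lemma unmatched_cover:
  assumes "w \<in> R" "y \<in> R" "w \<noteq> y"
  shows "y \<in> R - matched w \<or> w \<in> R - matched y"
proof (rule ccontr)
  assume "\<not> ?thesis"
  then have "C {w, y} = \<alpha> y" "C {y, w} = \<alpha> w" using assms unfolding matched_def by auto
  then have "\<alpha> y = \<alpha> w" by (simp add: insert_commute)
  then show False using star_inj assms unfolding inj_on_def by blast
qed

lemma color_nbhd_star_vertex_subset:
  assumes "w \<in> R"
  shows "CN w \<subseteq> \<alpha> ` matched w \<union> colors_to w (crossing w) \<union> colors_to w outer"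
proof -
  have "{w, x} = {x, w}" by (rule insert_commute)
  then have "colors_to w {x} \<subseteq> \<alpha> ` matched w"
    unfolding colors_to_def matched_def by auto
  moreover have "colors_to w R \<subseteq> \<alpha> ` matched w \<union> colors_to w (crossing w)"
    using colors_to_star_subset[of w] unfolding matched_def by auto
  ultimately have "colors_to w {x} \<union> colors_to w R \<subseteq> \<alpha> ` matched w \<union> colors_to w (crossing w)"
    by (rule Un_least[OF le_supI1])
  then show ?thesis using color_nbhd_subset[of w] by auto
qed

lemma card_color_nbhd_pair_star_le:
  assumes w: "w \<in> R" and w': "w' \<in> R"
  shows "card (CN w \<union> CN w') \<le> card (matched w \<union> matched w') + 2 * card outer + 6"
proof -
  let ?crossing = "colors_to w (crossing w) \<union> colors_to w' (crossing w')"
  let ?outer = "colors_to w outer \<union> colors_to w' outer"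
  have wx: "w \<noteq> x" "w' \<noteq> x" using w w' star_subset by auto
  have "CN w \<union> CN w' \<subseteq> (\<alpha> ` matched w \<union> colors_to w (crossing w) \<union> colors_to w outer)
      \<union> (\<alpha> ` matched w' \<union> colors_to w' (crossing w') \<union> colors_to w' outer)"
    using color_nbhd_star_vertex_subset[OF w] color_nbhd_star_vertex_subset[OF w'] by (rule Un_mono)
  also have "\<dots> = \<alpha> ` (matched w \<union> matched w') \<union> ?crossing \<union> ?outer"
    by (simp add: image_Un ac_simps)
  finally have "card (CN w \<union> CN w') \<le> card (\<alpha> ` (matched w \<union> matched w') \<union> ?crossing \<union> ?outer)"
    using finite_R finite_outer
    by (intro card_mono) (auto simp: finite_colors_to crossing_def matched_def)
  also have "\<dots> \<le> card (\<alpha> ` (matched w \<union> matched w')) + card ?crossing + card ?outer"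
    using card_Un_le[of "\<alpha> ` (matched w \<union> matched w') \<union> ?crossing" ?outer]
      card_Un_le[of "\<alpha> ` (matched w \<union> matched w')" ?crossing] by linarith
  also have "\<dots> \<le> card (matched w \<union> matched w') + 6 + 2 * card outer"
  proof -
    have "card (\<alpha> ` (matched w \<union> matched w')) \<le> card (matched w \<union> matched w')"
      using finite_R w w' by (intro card_image_le) (auto simp: matched_def)
    moreover have "card ?crossing \<le> 6"
      using card_Un_le[of "colors_to w (crossing w)" "colors_to w' (crossing w')"]
        card_colors_to_crossing_le[OF wx(1)] card_colors_to_crossing_le[OF wx(2)] by linarith
    moreover have "card ?outer \<le> 2 * card outer"
      using card_Un_le[of "colors_to w outer" "colors_to w' outer"]
        card_colors_to_le[OF finite_outer, of w] card_colors_to_le[OF finite_outer, of w'] by linarith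
    ultimately show ?thesis by linarith
  qed
  finally show ?thesis by simp
qed

lemma card_unmatched_overlap_le:
  assumes w: "w \<in> R" and w': "w' \<in> R" and "w \<noteq> w'"
  shows "card ((R - matched w) \<inter> (R - matched w')) \<le> card outer + s + 6"
proof -
  let ?K = "(R - matched w) \<inter> (R - matched w')"
  have "matched w \<union> matched w' = R - ?K"
    using w w' unfolding matched_def by blast
  moreover have "card (R - ?K) = card R - card ?K" using finite_R by (intro card_Diff_subset) auto
  moreover have "card ?K \<le> card R" using finite_R by (intro card_mono) auto
  moreover have "card V \<le> card (CN w \<union> CN w') + 1 + s"
    using defect w w' star_subset \<open>w \<noteq> w'\<close> by blast
  ultimately show ?thesis
    using card_color_nbhd_pair_star_le[OF w w'] card_V_eq by simp
qed

lemma card_star_le: "card R \<le> 4 * card outer + 4 * s + 27"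
proof -
  have "card R \<le> 4 * (card outer + s + 6) + 3"
    by (rule card_le_if_pairwise_covering[where K = "\<lambda>w. R - matched w"])
      (use finite_R unmatched_cover card_unmatched_overlap_le in auto)
  then show ?thesis by simp
qed

definition new_nbrs :: "'a \<Rightarrow> 'a set" where
  "new_nbrs w = {z\<in>outer. {w, z} \<in> E \<and> C {w, z} \<notin> CN x}"

lemma new_nbrs_subset: "new_nbrs w \<subseteq> outer - {w}"
  unfolding new_nbrs_def using edge_vertices(3) by blast

lemma new_nbrs_sym: "w \<in> outer \<Longrightarrow> z \<in> new_nbrs w \<Longrightarrow> w \<in> new_nbrs z"
  unfolding new_nbrs_def by (simp add: insert_commute)

lemma finite_new_nbrs: "finite (new_nbrs w)"
  using new_nbrs_subset finite_outer by (meson finite_Diff finite_subset)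

lemma card_new_nbrs_less:
  assumes "w \<in> outer" shows "card (new_nbrs w) < card outer"
proof -
  have "new_nbrs w \<subset> outer" using new_nbrs_subset assms by blast
  then show ?thesis using finite_outer by (rule psubset_card_mono[rotated])
qed

lemma new_colors_cover:
  assumes "w \<noteq> x"
  shows "CN w - CN x \<subseteq> colors_to w (crossing w) \<union> (\<lambda>z. C {w, z}) ` new_nbrs w"
proof
  fix \<gamma> assume \<gamma>: "\<gamma> \<in> CN w - CN x"
  then obtain z where z: "z \<in> V" "{w, z} \<in> E" "\<gamma> = C {w, z}"
    unfolding color_nbhd_eq_colors_to colors_to_def by auto
  have "z \<noteq> x"
  proof
    assume "z = x"
    then have "\<gamma> \<in> CN x" using z unfolding color_nbhd_def by auto
    then show False using \<gamma> by blast
  qed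
  show "\<gamma> \<in> colors_to w (crossing w) \<union> (\<lambda>z. C {w, z}) ` new_nbrs w"
  proof (cases "z \<in> R")
    case True
    have "\<gamma> \<noteq> \<alpha> z" using \<gamma> star_colors True by blast
    then have "z \<in> crossing w" using True z unfolding crossing_def by simp
    then show ?thesis using z unfolding colors_to_def crossing_def by blast
  next
    case False
    then have "z \<in> new_nbrs w" using z \<gamma> \<open>z \<noteq> x\<close> unfolding new_nbrs_def outer_def by blast
    then show ?thesis using z by blast
  qed
qed

lemma card_new_colors_ge:
  assumes w: "w \<in> outer"
  shows "card outer \<le> card ((\<lambda>z. C {w, z}) ` new_nbrs w) + s + 3"
proof -
  have wx: "w \<in> V" "w \<noteq> x" using w unfolding outer_def by auto
  have "card (CN w - CN x) \<le> card (colors_to w (crossing w) \<union> (\<lambda>z. C {w, z}) ` new_nbrs w)"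
    using new_colors_cover[OF wx(2)] finite_R finite_new_nbrs
    by (intro card_mono) (auto simp: finite_colors_to crossing_def)
  also have "\<dots> \<le> card (colors_to w (crossing w)) + card ((\<lambda>z. C {w, z}) ` new_nbrs w)"
    by (rule card_Un_le)
  finally have "card (CN w - CN x) \<le> 3 + card ((\<lambda>z. C {w, z}) ` new_nbrs w)"
    using card_colors_to_crossing_le[OF wx(2)] by linarith
  moreover have "card (CN x \<union> CN w) = card (CN x) + card (CN w - CN x)"
    using card_Un_disjoint[of "CN x" "CN w - CN x"] finite_E unfolding color_nbhd_def by auto
  moreover have "card V \<le> card (CN x \<union> CN w) + 1 + s"
    using defect[OF center wx(1)] wx(2) by simp
  ultimately show ?thesis using card_V_eq card_star by linarith
qed

definition rainbow_nbrs :: "'a \<Rightarrow> 'a set" where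
  "rainbow_nbrs w = (SOME U. U \<subseteq> new_nbrs w \<and> inj_on (\<lambda>z. C {w, z}) U
      \<and> (\<lambda>z. C {w, z}) ` U = (\<lambda>z. C {w, z}) ` new_nbrs w)"

lemma rainbow_nbrs_spec:
  "rainbow_nbrs w \<subseteq> new_nbrs w \<and> inj_on (\<lambda>z. C {w, z}) (rainbow_nbrs w)
    \<and> (\<lambda>z. C {w, z}) ` rainbow_nbrs w = (\<lambda>z. C {w, z}) ` new_nbrs w"
proof -
  have "\<exists>U\<subseteq>new_nbrs w. inj_on (\<lambda>z. C {w, z}) U \<and> (\<lambda>z. C {w, z}) ` new_nbrs w = (\<lambda>z. C {w, z}) ` U"
    using subset_image_inj[of "(\<lambda>z. C {w, z}) ` new_nbrs w" "\<lambda>z. C {w, z}" "new_nbrs w"] by simp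
  then have "\<exists>U. U \<subseteq> new_nbrs w \<and> inj_on (\<lambda>z. C {w, z}) U
      \<and> (\<lambda>z. C {w, z}) ` U = (\<lambda>z. C {w, z}) ` new_nbrs w"
    by (auto simp: eq_commute)
  then show ?thesis unfolding rainbow_nbrs_def by (rule someI_ex)
qed

lemma card_rainbow_nbrs_ge: "w \<in> outer \<Longrightarrow> card outer \<le> card (rainbow_nbrs w) + s + 3"
  using card_new_colors_ge rainbow_nbrs_spec[of w] card_image by fastforce

definition agree :: "'a \<Rightarrow> 'a \<Rightarrow> 'a set" where
  "agree a c = {y\<in>rainbow_nbrs a \<inter> rainbow_nbrs c. C {a, y} = C {c, y}}"

lemma card_agreeing_pairs_le:
  assumes y: "y \<in> outer"
  shows "card {p\<in>outer \<times> outer. fst p \<noteq> snd p \<and> y \<in> agree (fst p) (snd p)} \<le> 2 * (s + 2)\<^sup>2"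
proof -
  let ?g = "\<lambda>a. C {y, a}"
  have "{p\<in>outer \<times> outer. fst p \<noteq> snd p \<and> y \<in> agree (fst p) (snd p)}
      \<subseteq> {(a, c). a \<in> new_nbrs y \<and> c \<in> new_nbrs y \<and> a \<noteq> c \<and> ?g a = ?g c}"
  proof
    fix p assume "p \<in> {p\<in>outer \<times> outer. fst p \<noteq> snd p \<and> y \<in> agree (fst p) (snd p)}"
    then obtain a c where p: "p = (a, c)" and "a \<in> outer" "c \<in> outer" "a \<noteq> c" "y \<in> agree a c"
      by auto
    then have "y \<in> new_nbrs a" "y \<in> new_nbrs c" "C {a, y} = C {c, y}"
      using rainbow_nbrs_spec[of a] rainbow_nbrs_spec[of c] unfolding agree_def by auto
    then show "p \<in> {(a, c). a \<in> new_nbrs y \<and> c \<in> new_nbrs y \<and> a \<noteq> c \<and> ?g a = ?g c}"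
      unfolding p using new_nbrs_sym \<open>a \<in> outer\<close> \<open>c \<in> outer\<close> \<open>a \<noteq> c\<close> by (simp add: insert_commute)
  qed
  then have "card {p\<in>outer \<times> outer. fst p \<noteq> snd p \<and> y \<in> agree (fst p) (snd p)}
      \<le> card {(a, c). a \<in> new_nbrs y \<and> c \<in> new_nbrs y \<and> a \<noteq> c \<and> ?g a = ?g c}"
    using finite_new_nbrs by (intro card_mono) (auto intro: finite_subset[of _ "new_nbrs y \<times> new_nbrs y"])
  also have "\<dots> \<le> 2 * (card (new_nbrs y) - card (?g ` new_nbrs y))\<^sup>2"
    by (rule card_equal_value_pairs_le[OF finite_new_nbrs])
  also have "\<dots> \<le> 2 * (s + 2)\<^sup>2"
    using card_new_nbrs_less[OF y] card_new_colors_ge[OF y] by (simp add: power_mono)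
  finally show ?thesis .
qed

lemma sum_card_agree_le:
  "(\<Sum>p\<in>{p\<in>outer \<times> outer. fst p \<noteq> snd p}. card (agree (fst p) (snd p)))
    \<le> card outer * (2 * (s + 2)\<^sup>2)"
proof -
  let ?pairs = "{p\<in>outer \<times> outer. fst p \<noteq> snd p}"
  have "(\<Sum>p\<in>?pairs. card (agree (fst p) (snd p))) = (\<Sum>p\<in>?pairs. card {y\<in>outer. y \<in> agree (fst p) (snd p)})"
  proof (rule sum.cong[OF refl])
    fix p
    have "agree (fst p) (snd p) \<subseteq> outer"
      using rainbow_nbrs_spec[of "fst p"] new_nbrs_subset[of "fst p"] unfolding agree_def by blast
    then show "card (agree (fst p) (snd p)) = card {y\<in>outer. y \<in> agree (fst p) (snd p)}"
      by (simp add: Collect_conj_eq Int_absorb1 Int_commute)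
  qed
  also have "\<dots> = (\<Sum>y\<in>outer. card {p\<in>?pairs. y \<in> agree (fst p) (snd p)})"
    using finite_outer by (intro double_counting) auto
  also have "\<dots> \<le> (\<Sum>y\<in>outer. 2 * (s + 2)\<^sup>2)"
    using card_agreeing_pairs_le by (intro sum_mono) (simp add: conj_assoc)
  finally show ?thesis by simp
qed

lemma exists_pair_few_agree:
  assumes big: "3 * s + 11 \<le> card outer"
  shows "\<exists>a\<in>outer. \<exists>c\<in>outer. a \<noteq> c \<and> card (agree a c) \<le> s"
proof (rule ccontr)
  assume none: "\<not> ?thesis"
  define b where "b = card outer"
  let ?pairs = "{p\<in>outer \<times> outer. fst p \<noteq> snd p}"
  have many: "s + 1 \<le> card (agree (fst p) (snd p))" if "p \<in> ?pairs" for p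
    using that none by (cases p) force
  have "b * ((b - 1) * (s + 1)) \<le> card ?pairs * (s + 1)"
    using mult_le_mono1[OF card_off_diagonal_ge[OF finite_outer], of "s + 1"] unfolding b_def
    by (simp only: mult.assoc)
  also have "\<dots> \<le> (\<Sum>p\<in>?pairs. card (agree (fst p) (snd p)))"
    using sum_bounded_below[of ?pairs "s + 1"] many by simp
  also have "\<dots> \<le> b * (2 * (s + 2)\<^sup>2)"
    unfolding b_def by (rule sum_card_agree_le)
  finally have "(b - 1) * (s + 1) \<le> 2 * (s + 2)\<^sup>2"
    using big unfolding b_def by simp
  moreover have "(3 * s + 10) * (s + 1) \<le> (b - 1) * (s + 1)"
    using big unfolding b_def by (intro mult_right_mono) auto
  ultimately show False by (simp add: power2_eq_square algebra_simps)
qed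

lemma card_outer_le: "card outer \<le> 3 * s + 10"
proof (rule ccontr)
  assume big: "\<not> ?thesis"
  then obtain a c where ac: "a \<in> outer" "c \<in> outer" "a \<noteq> c" and few: "card (agree a c) \<le> s"
    using exists_pair_few_agree by force
  define Y where "Y = rainbow_nbrs a \<inter> rainbow_nbrs c - agree a c"
  have fin: "finite (rainbow_nbrs a)" "finite (rainbow_nbrs c)"
    using rainbow_nbrs_spec finite_new_nbrs finite_subset by metis+
  have "rainbow_nbrs a \<union> rainbow_nbrs c \<subseteq> outer"
    using rainbow_nbrs_spec[of a] rainbow_nbrs_spec[of c] new_nbrs_subset by blast
  then have "card (rainbow_nbrs a) + card (rainbow_nbrs c) \<le> card outer + card (rainbow_nbrs a \<inter> rainbow_nbrs c)"
    using card_Un_Int[OF fin] card_mono[OF finite_outer] by (metis add_le_mono1)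
  moreover have "card (agree a c) \<le> card (rainbow_nbrs a \<inter> rainbow_nbrs c)"
    using fin unfolding agree_def by (intro card_mono) auto
  then have "card Y = card (rainbow_nbrs a \<inter> rainbow_nbrs c) - card (agree a c)"
    unfolding Y_def using fin by (intro card_Diff_subset) (auto simp: agree_def)
  ultimately have "4 \<le> card Y"
    using card_rainbow_nbrs_ge[OF ac(1)] card_rainbow_nbrs_ge[OF ac(2)] few big by linarith
  moreover have "card ((\<lambda>y. C {c, y}) ` Y) \<le> 3"
  proof (rule card_crossing_colors_le_3[OF ac(3)])
    show "inj_on (\<lambda>y. C {a, y}) Y" using rainbow_nbrs_spec[of a] unfolding Y_def by (meson Diff_subset inf_le1 inj_on_subset subset_trans)
  qed (use rainbow_nbrs_spec[of a] rainbow_nbrs_spec[of c] in \<open>auto simp: Y_def agree_def new_nbrs_def\<close>)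
  moreover have "card ((\<lambda>y. C {c, y}) ` Y) = card Y"
    using rainbow_nbrs_spec[of c] unfolding Y_def by (intro card_image) (meson Diff_subset inf_le2 inj_on_subset subset_trans)
  ultimately show False by linarith
qed

end

lemma card_le_if_rainbow_C4_free:
  assumes "rainbow_C4_free V E C"
    and defect: "\<And>u v. u \<in> V \<Longrightarrow> v \<in> V \<Longrightarrow> u \<noteq> v \<Longrightarrow>
      card V \<le> card (color_nbhd E C u \<union> color_nbhd E C v) + 1 + s"
  shows "card V \<le> 19 * s + 78"
proof (cases "V = {}")
  case False
  interpret rainbow_C4_free V E C by fact
  obtain x where x: "x \<in> V" using False by blast
  have "CN x \<subseteq> (\<lambda>y. C {x, y}) ` {y\<in>V. {x, y} \<in> E}"
    using color_nbhd_eq_colors_to unfolding colors_to_def by simp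
  then obtain R where R: "R \<subseteq> {y\<in>V. {x, y} \<in> E}" "inj_on (\<lambda>y. C {x, y}) R"
    "CN x = (\<lambda>y. C {x, y}) ` R"
    unfolding subset_image_inj by blast
  interpret rainbow_star V E C x R s
  proof
    show "(\<lambda>y. C {x, y}) ` R = CN x" using R(3) by simp
  qed (use x R defect in auto)
  show ?thesis using card_V_eq card_star_le card_outer_le by linarith
qed simp

lemma card_color_nbhd_Un_Diff_le:
  assumes "finite E" "finite D"
  shows "card (color_nbhd E C u \<union> color_nbhd E C v)
    \<le> card (color_nbhd (E - D) C u \<union> color_nbhd (E - D) C v) + card D"
proof -
  let ?A' = "color_nbhd (E - D) C u \<union> color_nbhd (E - D) C v"
  have "color_nbhd E C u \<union> color_nbhd E C v \<subseteq> ?A' \<union> C ` D" unfolding color_nbhd_def by auto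
  then have "card (color_nbhd E C u \<union> color_nbhd E C v) \<le> card (?A' \<union> C ` D)"
    using assms by (intro card_mono) (auto simp: color_nbhd_def)
  also have "\<dots> \<le> card ?A' + card D"
    using card_Un_le[of ?A' "C ` D"] card_image_le[OF assms(2), of C] by linarith
  finally show ?thesis .
qed

lemma is_C4_subset: "is_C4 V E F \<Longrightarrow> F \<subseteq> E"
  unfolding is_C4_def by (elim exE conjE)

lemma is_C4_nonempty: "is_C4 V E F \<Longrightarrow> F \<noteq> {}"
  unfolding is_C4_def by (elim exE conjE) simp

lemma card_C4: "is_C4 V E F \<Longrightarrow> card F \<le> 4"
  unfolding is_C4_def by (elim exE conjE) (simp add: card_insert_le_m1)

lemma is_C4_mono: "is_C4 V E' F \<Longrightarrow> E' \<subseteq> E \<Longrightarrow> is_C4 V E F"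
  unfolding is_C4_def by (elim exE conjE) (intro exI conjI; assumption | blast)

lemma exists_rainbow_C4s:
  assumes simple: "simple_graph V E"
    and rich: "\<And>u v. u \<in> V \<Longrightarrow> v \<in> V \<Longrightarrow> u \<noteq> v \<Longrightarrow>
      card V \<le> card (color_nbhd E C u \<union> color_nbhd E C v) + 1"
  shows "76 * t + 3 \<le> card V \<Longrightarrow> \<exists>S. finite S \<and> card S = t \<and> (\<forall>F\<in>S. is_C4 V E F \<and> rainbow C F)"
proof (induction t)
  case 0
  show ?case by (intro exI[of _ "{}"]) simp
next
  case (Suc t)
  then obtain S where S: "finite S" "card S = t" "\<forall>F\<in>S. is_C4 V E F \<and> rainbow C F" by auto
  define D where "D = \<Union>S"
  have "finite E" using simple by (rule simple_graph_finite_edges)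
  have "D \<subseteq> E" unfolding D_def using S(3) is_C4_subset by blast
  then have "finite D" using \<open>finite E\<close> finite_subset by blast
  have "card D \<le> (\<Sum>F\<in>S. card F)" unfolding D_def by (rule card_Union_le_sum_card)
  also have "\<dots> \<le> 4 * t" using S card_C4 sum_bounded_above[of S card 4] by fastforce
  finally have card_D: "card D \<le> 4 * t" .
  have "\<not> rainbow_C4_free V (E - D) C"
  proof
    assume "rainbow_C4_free V (E - D) C"
    moreover have "card V \<le> card (color_nbhd (E - D) C u \<union> color_nbhd (E - D) C v) + 1 + 4 * t"
      if "u \<in> V" "v \<in> V" "u \<noteq> v" for u v
      using rich[OF that] card_color_nbhd_Un_Diff_le[OF \<open>finite E\<close> \<open>finite D\<close>, of C u v] card_D
      by linarith
    ultimately have "card V \<le> 19 * (4 * t) + 78" by (rule card_le_if_rainbow_C4_free)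
    then show False using Suc.prems by simp
  qed
  moreover have "simple_graph V (E - D)" using simple unfolding simple_graph_def by blast
  ultimately obtain F where F: "is_C4 V (E - D) F" "rainbow C F"
    unfolding rainbow_C4_free_def by blast
  have "F \<notin> S"
    using is_C4_subset[OF F(1)] is_C4_nonempty[OF F(1)] unfolding D_def by blast
  then show ?case
    using S F is_C4_mono[OF F(1)] by (intro exI[of _ "insert F S"]) auto
qed

theorem theorem6:
  fixes V :: "'a set" and E :: "'a set set" and C :: "'a set \<Rightarrow> nat" and k :: nat
  assumes "simple_graph V E"
    and "k \<ge> 1"
    and "int (card V) \<ge> 105 * int k - 24"
    and "\<forall>u\<in>V. \<forall>v\<in>V. u \<noteq> v \<longrightarrow>
           card (color_nbhd E C u \<union> color_nbhd E C v) + 1 \<ge> card V"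
  shows "\<exists>S. card S = k \<and> (\<forall>F\<in>S. is_C4 V E F \<and> rainbow C F)"
proof -
  have "76 * k + 3 \<le> card V" using assms(2,3) by linarith
  then show ?thesis using exists_rainbow_C4s[OF assms(1)] assms(4) by blast
qed

end
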